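(* Let $\Omega$ be a countably infinite set and $G$ a subgroup of $S=\mathrm{Sym}(\Omega)$. Suppose there exist a sequence $(\alpha_i)_{i\in\omega}$ of distinct elements of $\Omega$ and nonempty subsets $D_i\subseteq\Omega^i$ ($i\in\omega$) such that: (i) for each $i$ and each $(\beta_0,\ldots,\beta_i)\in D_{i+1}$, we have $(\beta_0,\ldots,\beta_{i-1})\in D_i$; (ii) for each $i$ and each $(\beta_0,\ldots,\beta_{i-1})\in D_i$, there exist infinitely many $\beta\in\Omega$ with $(\beta_0,\ldots,\beta_{i-1},\beta)\in D_{i+1}$; (iii) whenever $(\beta_i)_{i\in\omega}\in\Omega^\omega$ satisfies $(\beta_0,\ldots,\beta_{i-1})\in D_i$ for every $i$, there exists $g\in G$ with $\beta_i=\alpha_ig$ for all $i$. Then $G\approx S$.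
   Context: $\mathrm{Sym}(\Omega)$ is the group of all permutations of $\Omega$, acting on the right. For subgroups $G_1,G_2\le S$: $G_1\preccurlyeq G_2$ means there is a finite $U\subseteq S$ with $G_1\le\langle G_2\cup U\rangle$, and $G_1\approx G_2$ means $G_1\preccurlyeq G_2$ and $G_2\preccurlyeq G_1$. *)

theory Defs
  imports "HOL-Algebra.Bij" "HOL-Algebra.Generated_Groups" "HOL-Library.Countable_Set"
begin

text \<open>Sym(Omega), with Omega the universe of the type 'a, as the HOL-Algebra group of
bijections of UNIV (carrier = all bijections).\<close>

abbreviation SymG :: "('a \<Rightarrow> 'a) monoid" where
  "SymG \<equiv> BijGroup (UNIV :: 'a set)"

definition sym_preceq :: "('a \<Rightarrow> 'a) set \<Rightarrow> ('a \<Rightarrow> 'a) set \<Rightarrow> bool" where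
  "sym_preceq G1 G2 \<longleftrightarrow>
     (\<exists>U. finite U \<and> U \<subseteq> carrier SymG \<and> G1 \<subseteq> generate SymG (G2 \<union> U))"

definition sym_approx :: "('a \<Rightarrow> 'a) set \<Rightarrow> ('a \<Rightarrow> 'a) set \<Rightarrow> bool" where
  "sym_approx G1 G2 \<longleftrightarrow> sym_preceq G1 G2 \<and> sym_preceq G2 G1"

end

(*
  Adjoin to G finitely many permutations until the generated group contains the symmetric group
  of a moiety S (an infinite, co-infinite set).  Together with finitely many permutations
  such a group is already everything: conjugation moves any co-infinite set into S, and by
  Ramsey's theorem every permutation is a product of two with co-infinite support.

  To reach Sym(S), label the tree of finite sequences of naturals injectively by points so that
  every branch yields a sequence as in (iii).  A permutation l of the naturals preserving
  infinitely many initial segments is coded by a branch whose i-th node records the blocks of l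
  up to i; sending the i-th node of the branch of l to its (l i)-th node is one well-defined
  permutation N, and by (iii) a conjugate of N by an element of G acts as l on the points
  alpha i.  Arranging these points in columns, a Hilbert-hotel swindle with a column shift
  produces every permutation of the first column, because every permutation of the naturals is
  a product of two block-preserving ones.
*)

theory Submission
  imports Defs "HOL-Library.Ramsey" "HOL-Combinatorics.Permutations"
begin

(* HOL-Algebra's syntax for group inverses would capture inv, which here is Hilbert_Choice's. *)
unbundle no m_inv_syntax

definition perm_group :: "('a \<Rightarrow> 'a) set \<Rightarrow> bool" where
  "perm_group K \<longleftrightarrow>
     K \<subseteq> Collect bij \<and> id \<in> K \<and> (\<forall>f\<in>K. \<forall>g\<in>K. f \<circ> g \<in> K) \<and> (\<forall>f\<in>K. inv f \<in> K)"

lemma perm_group_bij: "perm_group K \<Longrightarrow> f \<in> K \<Longrightarrow> bij f"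
  by (auto simp: perm_group_def)

lemma perm_group_comp: "perm_group K \<Longrightarrow> f \<in> K \<Longrightarrow> g \<in> K \<Longrightarrow> f \<circ> g \<in> K"
  by (auto simp: perm_group_def)

lemma perm_group_inv: "perm_group K \<Longrightarrow> f \<in> K \<Longrightarrow> inv f \<in> K"
  by (auto simp: perm_group_def)

lemma carrier_SymG: "carrier SymG = Collect bij"
  by (auto simp: BijGroup_def Bij_def extensional_def)

lemma perm_group_generate_SymG:
  assumes "X \<subseteq> Collect bij"
  shows "perm_group (generate SymG X)"
proof -
  interpret group SymG by (rule group_BijGroup)
  have X: "X \<subseteq> carrier SymG" using assms by (simp add: carrier_SymG)
  have bij: "f \<in> generate SymG X \<Longrightarrow> bij f" for f
    using generate_in_carrier[OF X] by (auto simp: carrier_SymG)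
  have mult: "f \<otimes>\<^bsub>SymG\<^esub> g = f \<circ> g" if "bij f" "bij g" for f g
    using that by (auto simp: BijGroup_def Bij_def extensional_def compose_def)
  have inv: "m_inv SymG f = inv f" if "bij f" for f
    using that by (simp add: inv_BijGroup Bij_def restrict_def bij_betw_def)
  have "id \<in> generate SymG X"
    using generate.one[of SymG X] by (simp add: BijGroup_def restrict_def id_def)
  moreover have "f \<circ> g \<in> generate SymG X" if "f \<in> generate SymG X" "g \<in> generate SymG X" for f g
    using generate.eng[OF that] mult[OF bij bij] that by simp
  moreover have "inv f \<in> generate SymG X" if "f \<in> generate SymG X" for f
    using generate_m_inv_closed[OF X that] inv[OF bij[OF that]] by simp
  ultimately show ?thesis
    using bij by (auto simp: perm_group_def)
qed

lemma perm_group_conj_iff: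
  assumes K: "perm_group K" and h: "h \<in> K"
  shows "h \<circ> f \<circ> inv h \<in> K \<longleftrightarrow> f \<in> K"
proof
  have "bij h" using K h by (rule perm_group_bij)
  then have "f = inv h \<circ> (h \<circ> f \<circ> inv h) \<circ> h"
    by (simp add: fun_eq_iff bij_is_inj inv_f_f)
  then show "f \<in> K" if "h \<circ> f \<circ> inv h \<in> K"
    using that K h by (metis perm_group_comp perm_group_inv)
qed (use K h in \<open>metis perm_group_comp perm_group_inv\<close>)

lemma bij_permutesI: "bij p \<Longrightarrow> (\<And>x. x \<notin> S \<Longrightarrow> p x = x) \<Longrightarrow> p permutes S"
  by (auto simp: permutes_def bij_iff)

lemma permutes_conj:
  assumes p: "p permutes M" and h: "bij h"
  shows "h \<circ> p \<circ> inv h permutes h ` M"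
proof (rule bij_permutesI)
  show "bij (h \<circ> p \<circ> inv h)"
    using p h by (intro bij_comp bij_imp_bij_inv permutes_bij) auto
  fix z assume "z \<notin> h ` M"
  then have "inv h z \<notin> M"
    using h by (metis bij_inv_eq_iff image_eqI)
  then show "(h \<circ> p \<circ> inv h) z = z"
    using p h by (simp add: permutes_not_in bij_is_surj surj_f_inv_f)
qed

lemma perm_group_permutes_conj_mem:
  assumes K: "perm_group K" and SK: "{p. p permutes S} \<subseteq> K"
    and h: "h \<in> K" "h ` M \<subseteq> S" and p: "p permutes M"
  shows "p \<in> K"
proof -
  have "h \<circ> p \<circ> inv h permutes S"
    using permutes_conj[OF p perm_group_bij[OF K h(1)]] h(2) by (rule permutes_subset)
  then show ?thesis
    using SK perm_group_conj_iff[OF K h(1)] by blast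
qed

section \<open>Symmetric groups of moieties\<close>

lemma countable_infinite_bij_betw:
  assumes "countable X" "countable Y" "infinite X" "infinite Y"
  obtains f where "bij_betw f X Y"
proof
  have "bij_betw (from_nat_into X) UNIV X" "bij_betw (from_nat_into Y) UNIV Y"
    using bij_betw_from_nat_into assms by blast+
  then show "bij_betw (from_nat_into Y \<circ> inv_into UNIV (from_nat_into X)) X Y"
    by (blast intro: bij_betw_trans bij_betw_inv_into)
qed

lemma infinite_partition:
  assumes "infinite W"
  obtains A where "A \<subseteq> W" "infinite A" "infinite (W - A)"
proof -
  obtain A B where "A \<subseteq> W" "B \<subseteq> W" "infinite A" "infinite B" "A \<inter> B = {}"
    using infinite_split[OF assms] .
  moreover have "B \<subseteq> W - A"
    using \<open>B \<subseteq> W\<close> \<open>A \<inter> B = {}\<close> by blast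
  ultimately have "infinite (W - A)"
    using finite_subset by blast
  with \<open>A \<subseteq> W\<close> \<open>infinite A\<close> show ?thesis using that by blast
qed

lemma countable_permutes_image_subset:
  assumes W: "countable W" and X: "X \<subseteq> W" "infinite (W - X)"
    and T: "T \<subseteq> W" "infinite T" "infinite (W - T)"
  obtains a where "a permutes W" "a ` X \<subseteq> T"
proof -
  obtain e :: "'a \<Rightarrow> nat" where e: "inj_on e X"
    using countable_subset[OF X(1) W] by (rule countableE)
  obtain t :: "nat \<Rightarrow> 'a" where t: "inj t" "range t \<subseteq> T"
    using infinite_countable_subset[OF T(2)] by blast
  define Y where "Y = (t \<circ> e) ` X"
  have b: "bij_betw (t \<circ> e) X Y"
    unfolding Y_def using e t(1) by (intro bij_betw_imageI comp_inj_on inj_on_subset[OF t(1)]) auto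
  have Y: "Y \<subseteq> T"
    unfolding Y_def using t(2) by auto
  have "infinite (W - Y)"
    using T(3) Y by (meson Diff_mono finite_subset order_refl)
  then obtain c where c: "bij_betw c (W - X) (W - Y)"
    using countable_infinite_bij_betw[of "W - X" "W - Y"] W X(2) by auto
  define a0 where "a0 z = (if z \<in> X then (t \<circ> e) z else c z)" for z
  have "bij_betw a0 (X \<union> (W - X)) (Y \<union> (W - Y))"
  proof (rule bij_betw_combine)
    show "bij_betw a0 X Y"
      using b by (rule bij_betw_cong[THEN iffD1, rotated]) (simp add: a0_def)
    show "bij_betw a0 (W - X) (W - Y)"
      using c by (rule bij_betw_cong[THEN iffD1, rotated]) (simp add: a0_def)
  qed blast
  then have "bij_betw a0 W W"
    using X(1) Y T(1) by (simp add: Un_absorb1 Un_Diff_cancel)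
  then have "restrict_id a0 W permutes W"
    by (rule permutes_restrict_id)
  moreover have "restrict_id a0 W ` X \<subseteq> T"
    using X(1) Y by (auto simp: a0_def Y_def subset_iff)
  ultimately show ?thesis using that by blast
qed

lemma inj_infinite_support_obtains_disjoint_image:
  assumes f: "inj f" and supp: "infinite {z. f z \<noteq> z}"
  obtains Y where "infinite Y" "f ` Y \<inter> Y = {}"
proof -
  \<comment> \<open>Ramsey: colour a pair by whether \<open>f\<close> maps one of its points to the other.\<close>
  define colour where "colour P = (if \<exists>x\<in>P. f x \<in> P - {x} then 1 else 0 :: nat)" for P
  have "\<forall>x\<in>{z. f z \<noteq> z}. \<forall>y\<in>{z. f z \<noteq> z}. x \<noteq> y \<longrightarrow> colour {x, y} < 2"
    by (simp add: colour_def)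
  from Ramsey2[OF supp this] obtain Y k where Y: "Y \<subseteq> {z. f z \<noteq> z}" "infinite Y" "k < 2"
    and hom: "\<forall>x\<in>Y. \<forall>y\<in>Y. x \<noteq> y \<longrightarrow> colour {x, y} = k"
    by auto
  have adjacent: "f x = y \<or> f y = x" if "colour {x, y} \<noteq> 0" for x y
    using that by (auto simp: colour_def split: if_splits)
  have "k = 0"
  proof (rule ccontr)
    assume "k \<noteq> 0"
    obtain a where a: "a \<in> Y"
      using Y(2) by (metis finite.emptyI ex_in_conv)
    have "Y \<subseteq> {a, f a} \<union> f -` {a}"
    proof
      fix y assume "y \<in> Y"
      then have "y = a \<or> colour {a, y} \<noteq> 0"
        using hom a \<open>k \<noteq> 0\<close> by metis
      then show "y \<in> {a, f a} \<union> f -` {a}"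
        using adjacent[of a y] by auto
    qed
    moreover have "finite ({a, f a} \<union> f -` {a})"
      using f by (simp add: finite_vimageI)
    ultimately show False
      using Y(2) by (meson finite_subset)
  qed
  have "f x \<noteq> y" if "x \<in> Y" "y \<in> Y" for x y
  proof (cases "x = y")
    case False
    then have "colour {x, y} = 0"
      using hom that \<open>k = 0\<close> by metis
    then show ?thesis
      using False by (auto simp: colour_def split: if_splits)
  qed (use Y(1) that in auto)
  then have "f ` Y \<inter> Y = {}"
    by blast
  with Y(2) show ?thesis using that by blast
qed

lemma bij_infinite_support_eq_comp_permutes:
  assumes f: "bij f" and supp: "infinite {z. f z \<noteq> z}"
  obtains p q M N where "p permutes M" "q permutes N" "infinite (-M)" "infinite (-N)" "f = p \<circ> q"
proof -
  obtain Y0 where Y0: "infinite Y0" "f ` Y0 \<inter> Y0 = {}"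
    using inj_infinite_support_obtains_disjoint_image[OF bij_is_inj[OF f] supp] .
  obtain Y where Y: "Y \<subseteq> Y0" "infinite Y" "infinite (Y0 - Y)"
    using infinite_partition[OF Y0(1)] .
  have fi: "f (inv f z) = z" and if_: "inv f (f z) = z" for z
    using f by (simp_all add: bij_is_surj surj_f_inv_f bij_is_inj inv_f_f)
  have disj: "inv f ` Y \<inter> Y0 = {}"
  proof (intro equals0I)
    fix z assume "z \<in> inv f ` Y \<inter> Y0"
    then have "f z \<in> f ` Y0 \<inter> Y0"
      using Y(1) fi by auto
    then show False
      using Y0(2) by blast
  qed
  \<comment> \<open>\<open>q\<close> swaps each \<open>y \<in> Y\<close> with its preimage, so \<open>f \<circ> q\<close> fixes \<open>Y\<close> pointwise\<close>
  define q where "q z = (if z \<in> Y then inv f z else if z \<in> inv f ` Y then f z else z)" for z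
  have qq: "q \<circ> q = id"
  proof
    fix z
    consider "z \<in> Y" | "z \<in> inv f ` Y" | "z \<notin> Y" "z \<notin> inv f ` Y"
      by blast
    then show "(q \<circ> q) z = id z"
    proof cases
      case 1
      then have "inv f z \<notin> Y"
        using disj Y(1) by blast
      with 1 show ?thesis
        by (simp add: q_def fi)
    next
      case 2
      then have "z \<notin> Y"
        using disj Y(1) by blast
      with 2 show ?thesis
        by (auto simp: q_def fi)
    qed (simp add: q_def)
  qed
  have "q permutes Y \<union> inv f ` Y"
    by (rule bij_permutesI[OF o_bij[OF qq qq]]) (simp add: q_def)
  moreover have "infinite (- (Y \<union> inv f ` Y))"
  proof -
    have "Y0 - Y \<subseteq> - (Y \<union> inv f ` Y)"
      using disj by blast
    then show ?thesis
      using Y(3) finite_subset by blast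
  qed
  moreover have "f \<circ> q permutes - Y"
    by (rule bij_permutesI[OF bij_comp[OF o_bij[OF qq qq] f]]) (simp add: q_def fi)
  moreover have "infinite (- (- Y))"
    using Y(2) by simp
  moreover have "f = (f \<circ> q) \<circ> q"
    by (simp add: comp_assoc qq)
  ultimately show ?thesis using that by blast
qed

lemma perm_group_contains_bij_if_moves_coinfinite:
  assumes K: "perm_group K" and UI: "infinite (UNIV :: 'a set)"
    and SK: "{p. p permutes S} \<subseteq> K"
    and move: "\<And>M :: 'a set. infinite (- M) \<Longrightarrow> \<exists>h\<in>K. h ` M \<subseteq> S"
    and f: "bij f"
  shows "f \<in> K"
proof -
  have coinfinite: "p \<in> K" if "p permutes M" "infinite (- M)" for p M
    using move[OF that(2)] perm_group_permutes_conj_mem[OF K SK _ _ that(1)] by blast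
  show ?thesis
  proof (cases "infinite (- {z. f z \<noteq> z})")
    case True
    moreover have "f permutes {z. f z \<noteq> z}"
      using f by (rule bij_permutesI) simp
    ultimately show ?thesis
      by (rule coinfinite[rotated])
  next
    case False
    then have "infinite {z. f z \<noteq> z}"
      using UI by (metis Compl_partition2 finite_UnI)
    then obtain p q M N where "p permutes M" "q permutes N" "infinite (-M)" "infinite (-N)"
      and "f = p \<circ> q"
      using bij_infinite_support_eq_comp_permutes[OF f] by metis
    then show ?thesis
      using perm_group_comp[OF K] coinfinite by metis
  qed
qed

lemma countable_UNIV_obtains_bij_image_subset:
  assumes "countable (UNIV :: 'a set)" "infinite (- X)" "infinite Y" "infinite (- Y)"
  obtains h :: "'a \<Rightarrow> 'a" where "bij h" "h ` X \<subseteq> Y"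
  using countable_permutes_image_subset[OF assms(1), of X Y] assms(2-4)
  by (metis Compl_eq_Diff_UNIV permutes_bij subset_UNIV)

lemma perm_group_moves_into_moiety:
  fixes S :: "'a set"
  assumes K: "perm_group K" and cU: "countable (UNIV :: 'a set)"
    and coSK: "{p. p permutes - S} \<subseteq> K"
    and T: "T \<subseteq> - S" "infinite T" "infinite (- S - T)"
    and u: "u \<in> K" "u ` (S \<union> T) \<subseteq> S"
    and M: "infinite (- S - M)"
  obtains h where "h \<in> K" "h ` M \<subseteq> S"
proof -
  have "- S - M \<inter> - S = - S - M"
    by blast
  then have "infinite (- S - M \<inter> - S)"
    using M by simp
  then obtain a where a: "a permutes - S" "a ` (M \<inter> - S) \<subseteq> T"
    by (rule countable_permutes_image_subset[OF countable_subset[OF subset_UNIV cU] Int_lower2 _ T])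
  have "a z \<in> S \<union> T" if "z \<in> M" for z
    using a that by (cases "z \<in> S") (auto simp: permutes_not_in)
  then have "(u \<circ> a) ` M \<subseteq> S"
    using u(2) by auto
  moreover have "u \<circ> a \<in> K"
    using perm_group_comp[OF K u(1)] coSK a(1) by blast
  ultimately show ?thesis
    using that by blast
qed

lemma moiety_generates_bij:
  assumes cU: "countable (UNIV :: 'a set)" and S: "infinite S" "infinite (- S)"
  obtains U :: "('a \<Rightarrow> 'a) set" where "finite U" "U \<subseteq> Collect bij"
    "\<And>K. perm_group K \<Longrightarrow> U \<subseteq> K \<Longrightarrow> {p. p permutes S} \<subseteq> K \<Longrightarrow> Collect bij \<subseteq> K"
proof -
  obtain T where T: "T \<subseteq> - S" "infinite T" "infinite (- S - T)"
    using infinite_partition[OF S(2)] .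
  obtain t1 where t1: "bij t1" "t1 ` (- S) \<subseteq> S"
    using countable_UNIV_obtains_bij_image_subset[OF cU, of "- S" S] S by auto
  obtain t2 where t2: "bij t2" "t2 ` S \<subseteq> - S"
    using countable_UNIV_obtains_bij_image_subset[OF cU, of S "- S"] S by auto
  have "- (S \<union> T) = - S - T"
    by blast
  then obtain u where u: "bij u" "u ` (S \<union> T) \<subseteq> S"
    using countable_UNIV_obtains_bij_image_subset[OF cU, of "S \<union> T" S] S T(3) by auto
  show ?thesis
  proof
    show "finite {t1, t2, u}" "{t1, t2, u} \<subseteq> Collect bij"
      using t1 t2 u by auto
  next
    fix K assume K: "perm_group K" and U: "{t1, t2, u} \<subseteq> K" and SK: "{p. p permutes S} \<subseteq> K"
    have coSK: "{p. p permutes - S} \<subseteq> K"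
      using perm_group_permutes_conj_mem[OF K SK _ t1(2)] U by blast
    have into_S: "\<exists>h\<in>K. h ` M \<subseteq> S" if "infinite (- S - M)" for M
      using perm_group_moves_into_moiety[OF K cU coSK T _ u(2) that] U by blast
    \<comment> \<open>otherwise \<open>S - M\<close> is infinite, and \<open>t2\<close> moves it into \<open>- S\<close>\<close>
    have "\<exists>h\<in>K. h ` M \<subseteq> S" if M: "infinite (- M)" for M
    proof (cases "infinite (- S - M)")
      case False
      have "- M = (S - M) \<union> (- S - M)"
        by blast
      then have "infinite (S - M)"
        using M False by auto
      moreover have "t2 ` (S - M) \<subseteq> - S - t2 ` M"
        using t2 by (auto simp: bij_is_inj inj_eq)
      ultimately have "infinite (- S - t2 ` M)"
        using t2(1) by (metis finite_subset finite_imageD bij_is_inj inj_on_subset subset_UNIV)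
      then obtain h where "h \<in> K" "h ` t2 ` M \<subseteq> S"
        using into_S by blast
      moreover have "h \<circ> t2 \<in> K"
        using perm_group_comp[OF K \<open>h \<in> K\<close>] U by blast
      ultimately show ?thesis
        by (metis image_comp)
    qed (use into_S in blast)
    moreover have "infinite (UNIV :: 'a set)"
      by (rule infinite_super[OF subset_UNIV S(1)])
    ultimately show "Collect bij \<subseteq> K"
      using perm_group_contains_bij_if_moves_coinfinite[OF K _ SK] by blast
  qed
qed

section \<open>Block permutations of the naturals\<close>

definition segment_invariant :: "(nat \<Rightarrow> nat) \<Rightarrow> nat \<Rightarrow> bool" where
  "segment_invariant l c \<longleftrightarrow> l ` {..<c} = {..<c}"

text \<open>A block permutation permutes each block of some partition of the naturals into finite
  intervals; the cuts between blocks are the \<open>c\<close> with \<open>segment_invariant l c\<close>.\<close>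

definition block_perm :: "(nat \<Rightarrow> nat) \<Rightarrow> bool" where
  "block_perm l \<longleftrightarrow> bij l \<and> (\<forall>N. \<exists>c\<ge>N. segment_invariant l c)"

definition chain_layer :: "(nat \<Rightarrow> 'a set) \<Rightarrow> nat \<Rightarrow> 'a set" where
  "chain_layer Z k = Z k - (\<Union>j<k. Z j)"

lemma block_permI: "bij l \<Longrightarrow> (\<And>N. \<exists>c\<ge>N. segment_invariant l c) \<Longrightarrow> block_perm l"
  by (simp add: block_perm_def)

lemma chains_bij:
  fixes X :: "nat \<Rightarrow> 'a set" and Y :: "nat \<Rightarrow> 'b set"
  assumes mono: "\<And>k. X k \<subseteq> X (Suc k)" "\<And>k. Y k \<subseteq> Y (Suc k)"
    and finite: "\<And>k. finite (X k)" "\<And>k. finite (Y k)"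
    and card: "\<And>k. card (X k) = card (Y k)"
    and exhaust: "(\<Union>k. X k) = UNIV" "(\<Union>k. Y k) = UNIV"
  obtains b where "bij b" "\<And>k. b ` X k = Y k"
proof -
  have monoX: "j \<le> k \<Longrightarrow> X j \<subseteq> X k" and monoY: "j \<le> k \<Longrightarrow> Y j \<subseteq> Y k" for j k
    using lift_Suc_mono_le[of X, OF mono(1)] lift_Suc_mono_le[of Y, OF mono(2)] by blast+
  have chain_layer_Suc: "chain_layer X (Suc k) = X (Suc k) - X k" "chain_layer Y (Suc k) = Y (Suc k) - Y k" for k
    using monoX monoY by (fastforce simp: chain_layer_def less_Suc_eq_le)+
  have "card (chain_layer X k) = card (chain_layer Y k)" for k
  proof (cases k)
    case 0
    then show ?thesis
      using card by (simp add: chain_layer_def)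
  next
    case (Suc j)
    then show ?thesis
      using mono finite card by (simp add: chain_layer_Suc card_Diff_subset)
  qed
  then have "\<exists>bk. bij_betw bk (chain_layer X k) (chain_layer Y k)" for k
    by (intro finite_same_card_bij) (simp_all add: chain_layer_def finite)
  then obtain bl where bl: "\<And>k. bij_betw (bl k) (chain_layer X k) (chain_layer Y k)"
    by metis
  define b where "b x = bl (LEAST k. x \<in> X k) x" for x
  have least: "(LEAST k. x \<in> X k) = k" if "x \<in> chain_layer X k" for x k
    using that by (intro Least_equality) (auto simp: chain_layer_def not_le)
  have layer: "bij_betw b (chain_layer X k) (chain_layer Y k)" for k
    using bl[of k] by (rule bij_betw_cong[THEN iffD2, rotated]) (simp add: b_def least)
  have bX: "bij_betw b (X k) (Y k)" for k
  proof (induction k)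
    case 0
    then show ?case
      using layer[of 0] by (simp add: chain_layer_def)
  next
    case (Suc k)
    have "bij_betw b (X k \<union> chain_layer X (Suc k)) (Y k \<union> chain_layer Y (Suc k))"
      by (rule bij_betw_combine[OF Suc.IH layer]) (auto simp: chain_layer_Suc)
    then show ?case
      using mono by (simp add: chain_layer_Suc Un_absorb1 Un_Diff_cancel)
  qed
  have "bij_betw b (\<Union>k. X k) (\<Union>k. Y k)"
    by (rule bij_betw_UNION_chain[OF _ bX]) (meson le_cases monoX)
  then show ?thesis
    using that bX exhaust by (simp add: bij_betw_def)
qed

lemma obtain_absorbing_sequence:
  fixes p q :: "nat \<Rightarrow> nat"
  obtains r :: "nat \<Rightarrow> nat"
  where "strict_mono r" "\<And>k. p ` {..<r k} \<subseteq> {..<r (Suc k)}" "\<And>k. q ` {..<r k} \<subseteq> {..<r (Suc k)}"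
proof
  define r where "r = rec_nat 0 (\<lambda>k rk. Suc (rk + (\<Sum>i<rk. p i + q i)))"
  have rSuc: "r (Suc k) = Suc (r k + (\<Sum>i<r k. p i + q i))" for k
    by (simp add: r_def)
  then show "strict_mono r"
    by (simp add: strict_mono_Suc_iff)
  have "p i + q i \<le> (\<Sum>i<r k. p i + q i)" if "i < r k" for i k
    using that by (intro member_le_sum) auto
  then show "p ` {..<r k} \<subseteq> {..<r (Suc k)}" "q ` {..<r k} \<subseteq> {..<r (Suc k)}" for k
    unfolding rSuc by fastforce+
qed

lemma bij_nat_obtains_interleaving_bij:
  fixes p :: "nat \<Rightarrow> nat"
  assumes p: "bij p"
  obtains r b where "\<And>n k. n \<le> k \<Longrightarrow> n < r (Suc k)" "bij b"
    "\<And>k. b ` {..<r (Suc (2 * k))} = {..<r (Suc (2 * k))}"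
    "\<And>k. b ` inv p ` {..<r (Suc (Suc (2 * k)))} = {..<r (Suc (Suc (2 * k)))}"
proof -
  obtain r where r: "strict_mono r" "\<And>k. p ` {..<r k} \<subseteq> {..<r (Suc k)}"
    "\<And>k. inv p ` {..<r k} \<subseteq> {..<r (Suc k)}"
    using obtain_absorbing_sequence[of p "inv p"] by blast
  define X where "X k = (if even k then {..<r (Suc k)} else inv p ` {..<r (Suc k)})" for k
  define Y where "Y k = {..<r (Suc k)}" for k
  have stage: "n < r (Suc k)" if "n \<le> k" for n k
    using strict_mono_imp_increasing[OF r(1), of "Suc k"] that by simp
  have "X k \<subseteq> X (Suc k)" for k
    using r(2)[of "Suc k"] r(3)[of "Suc k"] p
    by (auto simp: X_def image_subset_iff bij_is_inj inv_f_f intro!: image_eqI[where x = "p _"])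
  moreover have "Y k \<subseteq> Y (Suc k)" for k
    using strict_monoD[OF r(1), of "Suc k" "Suc (Suc k)"] by (auto simp: Y_def)
  moreover have "finite (X k)" "finite (Y k)" for k
    by (simp_all add: X_def Y_def)
  moreover have "card (X k) = card (Y k)" for k
  proof -
    have "inj_on (inv p) {..<r (Suc k)}"
      using p by (meson bij_imp_bij_inv bij_is_inj inj_on_subset subset_UNIV)
    then show ?thesis
      by (simp add: X_def Y_def card_image)
  qed
  moreover have "(\<Union>k. X k) = UNIV" "(\<Union>k. Y k) = UNIV"
  proof -
    have "n \<in> X (2 * n)" "n \<in> Y n" for n
      using stage[of n] by (simp_all add: X_def Y_def)
    then show "(\<Union>k. X k) = UNIV" "(\<Union>k. Y k) = UNIV"
      by blast+
  qed
  ultimately obtain b where b: "bij b" "\<And>k. b ` X k = Y k"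
    by (rule chains_bij) blast
  have "b ` {..<r (Suc (2 * k))} = {..<r (Suc (2 * k))}"
    "b ` inv p ` {..<r (Suc (Suc (2 * k)))} = {..<r (Suc (Suc (2 * k)))}" for k
    using b(2)[of "2 * k"] b(2)[of "Suc (2 * k)"] by (simp_all add: X_def Y_def)
  with stage b(1) show ?thesis
    using that by blast
qed

lemma bij_nat_eq_comp_block_perms:
  fixes p :: "nat \<Rightarrow> nat"
  assumes p: "bij p"
  obtains b1 b2 where "block_perm b1" "block_perm b2" "p = b1 \<circ> b2"
proof -
  obtain r b2 where stage: "\<And>n k. n \<le> k \<Longrightarrow> n < r (Suc k)" and b2: "bij b2"
    "\<And>k. b2 ` {..<r (Suc (2 * k))} = {..<r (Suc (2 * k))}"
    "\<And>k. b2 ` inv p ` {..<r (Suc (Suc (2 * k)))} = {..<r (Suc (Suc (2 * k)))}"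
    using bij_nat_obtains_interleaving_bij[OF p] by blast
  have "block_perm b2"
  proof (rule block_permI[OF b2(1)])
    fix N
    have "segment_invariant b2 (r (Suc (2 * N)))" "N \<le> r (Suc (2 * N))"
      using b2(2)[of N] stage[of N "2 * N"] by (simp_all add: segment_invariant_def)
    then show "\<exists>c\<ge>N. segment_invariant b2 c"
      by blast
  qed
  moreover have "block_perm (p \<circ> inv b2)"
  proof (rule block_permI)
    show "bij (p \<circ> inv b2)"
      using p b2(1) by (simp add: bij_comp bij_imp_bij_inv)
    fix N
    let ?c = "r (Suc (Suc (2 * N)))"
    have "inv b2 ` {..<?c} = inv p ` {..<?c}"
      using image_inv_f_f[OF bij_is_inj[OF b2(1)], of "inv p ` {..<?c}"] unfolding b2(3) .
    then have "(p \<circ> inv b2) ` {..<?c} = p ` inv p ` {..<?c}"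
      by (metis image_comp)
    also have "\<dots> = {..<?c}"
      using p by (simp add: image_image bij_is_surj surj_f_inv_f)
    finally have "segment_invariant (p \<circ> inv b2) ?c"
      unfolding segment_invariant_def .
    moreover have "N \<le> ?c"
      using stage[of N "Suc (2 * N)"] by simp
    ultimately show "\<exists>c\<ge>N. segment_invariant (p \<circ> inv b2) c"
      by blast
  qed
  moreover have "p = (p \<circ> inv b2) \<circ> b2"
    using b2(1) by (simp add: fun_eq_iff bij_is_inj inv_f_f)
  ultimately show ?thesis
    using that by blast
qed

section \<open>Coding block permutations by words\<close>

definition next_cut :: "(nat \<Rightarrow> nat) \<Rightarrow> nat \<Rightarrow> nat" where
  "next_cut l c = (LEAST d. c < d \<and> segment_invariant l d)"

definition block_code :: "(nat \<Rightarrow> nat) \<Rightarrow> nat \<Rightarrow> nat" where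
  "block_code l i = (if segment_invariant l i then Suc (list_encode (map l [i..<next_cut l i])) else 0)"

lemma segment_invariant_0: "segment_invariant l 0"
  by (simp add: segment_invariant_def)

lemma next_cut_props:
  assumes "block_perm l"
  shows "c < next_cut l c" "segment_invariant l (next_cut l c)"
    and "\<And>j. c < j \<Longrightarrow> j < next_cut l c \<Longrightarrow> \<not> segment_invariant l j"
proof -
  obtain d where "d \<ge> Suc c" "segment_invariant l d"
    using assms unfolding block_perm_def by blast
  then have "c < d \<and> segment_invariant l d"
    by simp
  then show "c < next_cut l c" "segment_invariant l (next_cut l c)"
    unfolding next_cut_def by (metis (mono_tags, lifting) LeastI)+
  show "\<not> segment_invariant l j" if "c < j" "j < next_cut l c" for j
    using that not_less_Least unfolding next_cut_def by blast
qed

lemma segment_invariant_block_image: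
  assumes "bij l" "segment_invariant l c" "segment_invariant l d" "c \<le> d"
  shows "l ` {c..<d} = {c..<d}"
proof -
  have "{c..<d} = {..<d} - {..<c}"
    by auto
  moreover have "l ` ({..<d} - {..<c}) = l ` {..<d} - l ` {..<c}"
    by (rule image_set_diff[OF bij_is_inj[OF assms(1)]])
  ultimately show ?thesis
    using assms(2,3) by (simp add: segment_invariant_def)
qed

lemma block_code_eqD:
  assumes m: "block_perm m" and c: "segment_invariant l c" and eq: "block_code l c = block_code m c"
  shows "next_cut m c = next_cut l c" "\<And>j. c \<le> j \<Longrightarrow> j < next_cut l c \<Longrightarrow> l j = m j"
proof -
  have "Suc (list_encode (map m [c..<next_cut m c])) = Suc (list_encode (map l [c..<next_cut l c]))"
    using c eq by (simp add: block_code_def split: if_splits)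
  then have map_eq: "map m [c..<next_cut m c] = map l [c..<next_cut l c]"
    by (metis Suc_inject list_encode_inverse)
  have "next_cut m c - c = next_cut l c - c"
    using arg_cong[OF map_eq, of length] by (simp only: length_map length_upt)
  moreover have "c < next_cut m c"
    using next_cut_props(1)[OF m] .
  ultimately show cut_eq: "next_cut m c = next_cut l c"
    by linarith
  show "l j = m j" if "c \<le> j" "j < next_cut l c" for j
    using map_eq that unfolding cut_eq by (simp add: map_eq_conv)
qed

lemma block_codes_agree_obtains_block:
  assumes l: "block_perm l" and m: "block_perm m" and agree: "\<And>j. j \<le> i \<Longrightarrow> block_code l j = block_code m j"
  obtains c d where "c \<le> i" "i < d" "\<forall>j<d. block_code l j = block_code m j"
    "\<forall>j. c \<le> j \<and> j < d \<longrightarrow> l j = m j" "l ` {c..<d} = {c..<d}"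
proof -
  \<comment> \<open>\<open>[c, d)\<close> is the block of \<open>l\<close> containing \<open>i\<close>\<close>
  define c where "c = Max {c. c \<le> i \<and> segment_invariant l c}"
  have "{c. c \<le> i \<and> segment_invariant l c} \<noteq> {}"
    using segment_invariant_0[of l] by blast
  then have "c \<in> {c. c \<le> i \<and> segment_invariant l c}"
    unfolding c_def by (intro Max_in) simp_all
  then have c: "c \<le> i" "segment_invariant l c"
    by simp_all
  have c_max: "c' \<le> c" if "c' \<le> i" "segment_invariant l c'" for c'
    unfolding c_def using that by (intro Max_ge) simp_all
  define d where "d = next_cut l c"
  have cd: "c < d" "segment_invariant l d" "\<And>j. c < j \<Longrightarrow> j < d \<Longrightarrow> \<not> segment_invariant l j"
    using next_cut_props[OF l, of c] by (simp_all add: d_def)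
  have "i < d"
    using c_max[of d] cd(1,2) by linarith
  have code_c: "block_code l c = block_code m c"
    using agree c(1) by simp
  have "block_code l j = block_code m j" if "j < d" for j
  proof (cases "j \<le> i")
    case False
    then have "\<not> segment_invariant l j" "\<not> segment_invariant m j"
      using cd(3) next_cut_props(3)[OF m, of c j] block_code_eqD(1)[OF m c(2) code_c] c(1) that
      by (simp_all add: d_def)
    then show ?thesis
      by (simp add: block_code_def)
  qed (use agree in simp)
  moreover have "l j = m j" if "c \<le> j" "j < d" for j
    using block_code_eqD(2)[OF m c(2) code_c] that by (simp add: d_def)
  moreover have "l ` {c..<d} = {c..<d}"
    using l c(2) cd(1,2) by (simp add: block_perm_def segment_invariant_block_image)
  ultimately show ?thesis
    using that c(1) \<open>i < d\<close> by blast
qed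

definition block_word :: "(nat \<Rightarrow> nat) \<Rightarrow> nat \<Rightarrow> nat list" where
  "block_word l n = map (block_code l) [0..<n]"

lemma length_block_word [simp]: "length (block_word l n) = n"
  by (simp add: block_word_def)

lemma block_word_take: "j \<le> n \<Longrightarrow> take j (block_word l n) = block_word l j"
  by (simp add: block_word_def take_map)

lemma block_word_Suc_eqD:
  assumes "block_word l (Suc i) = block_word m (Suc j)"
  shows "i = j" "\<And>k. k \<le> i \<Longrightarrow> block_code l k = block_code m k"
proof -
  show ij: "i = j"
    using arg_cong[OF assms, of length] by simp
  fix k assume "k \<le> i"
  then have "block_word l (Suc i) ! k = block_word m (Suc i) ! k"
    using assms ij by simp
  then show "block_code l k = block_code m k"
    using \<open>k \<le> i\<close> by (simp add: block_word_def del: upt_Suc)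
qed

lemma block_word_cong: "(\<And>k. k < n \<Longrightarrow> block_code l k = block_code m k) \<Longrightarrow> block_word l n = block_word m n"
  by (simp add: block_word_def)

lemma block_word_shift_eq_iff:
  assumes l: "block_perm l" and m: "block_perm m"
  shows "block_word l (Suc (l i)) = block_word m (Suc (m j)) \<longleftrightarrow> block_word l (Suc i) = block_word m (Suc j)"
proof
  assume eq: "block_word l (Suc (l i)) = block_word m (Suc (m j))"
  \<comment> \<open>the common prefix codes the block of \<open>l\<close> around \<open>l i\<close>, and \<open>m\<close> agrees with \<open>l\<close> on it\<close>
  obtain c d where cd: "c \<le> l i" "l i < d" "\<forall>k<d. block_code l k = block_code m k"
      "\<forall>k. c \<le> k \<and> k < d \<longrightarrow> l k = m k" "l ` {c..<d} = {c..<d}"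
    using block_codes_agree_obtains_block[OF l m block_word_Suc_eqD(2)[OF eq]] by metis
  have inj: "inj l" "inj m"
    using l m by (simp_all add: block_perm_def bij_is_inj)
  have i: "i \<in> {c..<d}"
    using cd(1,2,5) inj(1) by (metis atLeastLessThan_iff image_iff inj_image_mem_iff)
  have "m j \<in> {c..<d}"
    using cd(1,2) block_word_Suc_eqD(1)[OF eq] by simp
  then obtain j' where j': "j' \<in> {c..<d}" "m j = l j'"
    using cd(5) by (metis imageE)
  then have "l j' = l i" "m j = m j'"
    using cd(4) block_word_Suc_eqD(1)[OF eq] by simp_all
  then have "j = i"
    using inj by (simp add: inj_eq)
  moreover have "block_word l (Suc i) = block_word m (Suc i)"
    by (rule block_word_cong) (use cd(3) i in auto)
  ultimately show "block_word l (Suc i) = block_word m (Suc j)"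
    by simp
next
  assume eq: "block_word l (Suc i) = block_word m (Suc j)"
  obtain c d where cd: "c \<le> i" "i < d" "\<forall>k<d. block_code l k = block_code m k"
      "\<forall>k. c \<le> k \<and> k < d \<longrightarrow> l k = m k" "l ` {c..<d} = {c..<d}"
    using block_codes_agree_obtains_block[OF l m block_word_Suc_eqD(2)[OF eq]] by metis
  have "l i \<in> {c..<d}"
    using cd(1,2,5) by auto
  then have "block_word l (Suc (l i)) = block_word m (Suc (l i))"
    using cd(3) by (intro block_word_cong) simp
  then show "block_word l (Suc (l i)) = block_word m (Suc (m j))"
    using cd(1,2,4) block_word_Suc_eqD(1)[OF eq] by simp
qed

definition block_words :: "nat list set" where
  "block_words = {block_word l (Suc i) | l i. block_perm l}"

text \<open>The word coding position \<open>i\<close> of \<open>l\<close> is sent to the word coding position \<open>l i\<close>; by the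
  previous lemma this does not depend on the choice of \<open>l\<close> and \<open>i\<close>.\<close>

definition word_shift :: "nat list \<Rightarrow> nat list" where
  "word_shift w =
     (if w \<in> block_words
      then (SOME w'. \<exists>l i. block_perm l \<and> w = block_word l (Suc i) \<and> w' = block_word l (Suc (l i)))
      else w)"

lemma block_word_in_block_words: "block_perm l \<Longrightarrow> block_word l (Suc i) \<in> block_words"
  unfolding block_words_def by blast

lemma block_wordsE:
  assumes "w \<in> block_words"
  obtains l i where "block_perm l" "w = block_word l (Suc i)"
  using assms unfolding block_words_def by blast

lemma word_shift_block_word:
  assumes l: "block_perm l"
  shows "word_shift (block_word l (Suc i)) = block_word l (Suc (l i))"
proof -
  let ?P = "\<lambda>w'. \<exists>m j. block_perm m \<and> block_word l (Suc i) = block_word m (Suc j) \<and> w' = block_word m (Suc (m j))"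
  have "?P (block_word l (Suc (l i)))"
    using l by blast
  then have "?P (SOME w'. ?P w')"
    by (rule someI)
  moreover have "word_shift (block_word l (Suc i)) = (SOME w'. ?P w')"
    using block_word_in_block_words[OF l] by (simp add: word_shift_def)
  ultimately obtain m j where m: "block_perm m" and eq: "block_word l (Suc i) = block_word m (Suc j)"
    and shift: "word_shift (block_word l (Suc i)) = block_word m (Suc (m j))"
    by auto
  have "block_word l (Suc (l i)) = block_word m (Suc (m j))"
    using block_word_shift_eq_iff[OF l m] eq by blast
  with shift show ?thesis
    by simp
qed

lemma word_shift_image_block_words: "word_shift ` block_words = block_words"
proof (intro equalityI subsetI)
  fix w assume "w \<in> word_shift ` block_words"
  then obtain l i where "block_perm l" "w = word_shift (block_word l (Suc i))"
    by (auto elim: block_wordsE)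
  then show "w \<in> block_words"
    by (simp add: word_shift_block_word block_word_in_block_words)
next
  fix w assume "w \<in> block_words"
  then obtain l i where l: "block_perm l" and w: "w = block_word l (Suc i)"
    by (rule block_wordsE)
  have "l (inv l i) = i"
    using l by (simp add: block_perm_def bij_is_surj surj_f_inv_f)
  then have "w = word_shift (block_word l (Suc (inv l i)))"
    using l w by (simp add: word_shift_block_word)
  then show "w \<in> word_shift ` block_words"
    using block_word_in_block_words[OF l] by blast
qed

lemma bij_word_shift: "bij word_shift"
proof -
  have "inj_on word_shift block_words"
  proof (rule inj_onI)
    fix w w' assume "w \<in> block_words" "w' \<in> block_words" "word_shift w = word_shift w'"
    then show "w = w'"
      by (elim block_wordsE) (simp add: word_shift_block_word block_word_shift_eq_iff)
  qed
  then have "restrict_id word_shift block_words permutes block_words"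
    using word_shift_image_block_words by (intro permutes_restrict_id bij_betw_imageI)
  moreover have "restrict_id word_shift block_words = word_shift"
    by (auto simp: fun_eq_iff word_shift_def)
  ultimately show ?thesis
    using permutes_bij by metis
qed

section \<open>An injective labelling of the tree of finite sequences\<close>

text \<open>An enumeration of the finite sequences of naturals in which every proper prefix of a sequence
  comes first: \<open>list_encode\<close> grows under consing, and the reversal turns extension at the end
  into consing.\<close>

definition node_index :: "nat list \<Rightarrow> nat" where
  "node_index t = list_encode (rev t)"

definition index_node :: "nat \<Rightarrow> nat list" where
  "index_node n = rev (list_decode n)"

lemma index_node_node_index [simp]: "index_node (node_index t) = t"
  by (simp add: node_index_def index_node_def)

lemma node_index_index_node [simp]: "node_index (index_node n) = n"
  by (simp add: node_index_def index_node_def)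

lemma inj_node_index: "inj node_index"
  by (metis injI index_node_node_index)

lemma list_encode_append_le: "list_encode ys \<le> list_encode (xs @ ys)"
proof (induction xs)
  case (Cons x xs)
  have "list_encode (xs @ ys) \<le> prod_encode (x, list_encode (xs @ ys))"
    by (rule le_prod_encode_2)
  then show ?case
    using Cons by simp
qed simp

lemma list_encode_append_less: "xs \<noteq> [] \<Longrightarrow> list_encode ys < list_encode (xs @ ys)"
proof (cases xs)
  case (Cons x xs')
  have "list_encode ys \<le> list_encode (xs' @ ys)"
    by (rule list_encode_append_le)
  also have "\<dots> \<le> prod_encode (x, list_encode (xs' @ ys))"
    by (rule le_prod_encode_2)
  finally show ?thesis
    using Cons by simp
qed simp

lemma node_index_take_less: "j < length t \<Longrightarrow> node_index (take j t) < node_index t"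
proof -
  assume j: "j < length t"
  have "rev t = rev (drop j t) @ rev (take j t)"
    by (metis append_take_drop_id rev_append)
  moreover have "rev (drop j t) \<noteq> []"
    using j by simp
  ultimately show ?thesis
    unfolding node_index_def by (metis list_encode_append_less)
qed

text \<open>The labels along the path from the root to \<open>t\<close>; the root itself contributes no label.\<close>

definition path_labels :: "(nat list \<Rightarrow> 'a) \<Rightarrow> nat list \<Rightarrow> 'a list" where
  "path_labels v t = map (\<lambda>j. v (take j t)) [1..<Suc (length t)]"

lemma path_labels_Nil [simp]: "path_labels v [] = []"
  by (simp add: path_labels_def)

lemma path_labels_snoc: "path_labels v (t @ [k]) = path_labels v t @ [v (t @ [k])]"
proof -
  have "map (\<lambda>j. v (take j (t @ [k]))) [1..<Suc (length t)] = path_labels v t"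
    unfolding path_labels_def by (intro map_cong) auto
  then show ?thesis
    by (simp add: path_labels_def)
qed

context
  fixes D :: "nat \<Rightarrow> 'a list set"
  assumes D_nonempty: "\<And>i. D i \<noteq> {}"
    and D_length: "\<And>i xs. xs \<in> D i \<Longrightarrow> length xs = i"
    and D_extend: "\<And>i xs. xs \<in> D i \<Longrightarrow> infinite {b. xs @ [b] \<in> D (Suc i)}"
begin

lemma Nil_in_D: "[] \<in> D 0"
  using D_nonempty[of 0] D_length by fastforce

lemma infinite_labels: "infinite (UNIV :: 'a set)"
  using D_extend[OF Nil_in_D] by (metis finite_subset subset_UNIV)

definition parent_labels :: "nat \<Rightarrow> 'a list \<Rightarrow> 'a list" where
  "parent_labels n L = map (\<lambda>j. L ! node_index (take j (index_node n))) [1..<length (index_node n)]"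

definition fresh_label :: "nat \<Rightarrow> 'a list \<Rightarrow> 'a" where
  "fresh_label n L =
     (if index_node n = [] then (SOME b. b \<notin> set L)
      else (SOME b. b \<notin> set L \<and> parent_labels n L @ [b] \<in> D (length (index_node n))))"

text \<open>\<open>labels_upto n\<close> lists the labels of the nodes with index below \<open>n\<close>; a node is labelled
  after all its proper prefixes, which have smaller indices.\<close>

primrec labels_upto :: "nat \<Rightarrow> 'a list" where
  "labels_upto 0 = []"
| "labels_upto (Suc n) = labels_upto n @ [fresh_label n (labels_upto n)]"

definition tree_label :: "nat list \<Rightarrow> 'a" where
  "tree_label t = labels_upto (Suc (node_index t)) ! node_index t"

lemma length_labels_upto [simp]: "length (labels_upto n) = n"
  by (induction n) auto

lemma take_labels_upto: "m \<le> n \<Longrightarrow> take m (labels_upto n) = labels_upto m"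
  by (induction n) (auto simp: le_Suc_eq)

lemma labels_upto_nth: "m < n \<Longrightarrow> labels_upto n ! m = tree_label (index_node m)"
  using take_labels_upto[of "Suc m" n] unfolding tree_label_def
  by (metis Suc_leI lessI nth_take node_index_index_node)

lemma tree_label_index_node: "tree_label (index_node n) = fresh_label n (labels_upto n)"
  by (simp add: tree_label_def nth_append)

lemma parent_labels_labels_upto:
  assumes "index_node n = t @ [k]"
  shows "parent_labels n (labels_upto n) = path_labels tree_label t"
  unfolding parent_labels_def path_labels_def
proof (rule map_cong)
  show "[1..<length (index_node n)] = [1..<Suc (length t)]"
    using assms by simp
  fix j assume "j \<in> set [1..<Suc (length t)]"
  then have j: "j \<le> length t"
    by auto
  then have "take j (index_node n) = take j t"
    using assms by simp
  moreover have "node_index (take j t) < n"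
    using node_index_take_less[of j "index_node n"] j assms by (simp, metis node_index_index_node)
  ultimately show "labels_upto n ! node_index (take j (index_node n)) = tree_label (take j t)"
    by (simp add: labels_upto_nth)
qed

lemma fresh_label_props:
  assumes IH: "\<And>m. m < n \<Longrightarrow> path_labels tree_label (index_node m) \<in> D (length (index_node m))"
  shows "fresh_label n (labels_upto n) \<notin> set (labels_upto n)"
    and "path_labels tree_label (index_node n) \<in> D (length (index_node n))"
proof -
  let ?L = "labels_upto n"
  have "fresh_label n ?L \<notin> set ?L \<and> path_labels tree_label (index_node n) \<in> D (length (index_node n))"
  proof (cases "index_node n" rule: rev_cases)
    case Nil
    have "\<exists>b. b \<notin> set ?L"
      using infinite_labels by (metis ex_new_if_finite finite_set)
    then have "(SOME b. b \<notin> set ?L) \<notin> set ?L"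
      by (rule someI_ex)
    then show ?thesis
      using Nil Nil_in_D by (simp add: fresh_label_def)
  next
    case (snoc t k)
    let ?Q = "\<lambda>b. b \<notin> set ?L \<and> parent_labels n ?L @ [b] \<in> D (length (index_node n))"
    have "node_index t < n"
      using node_index_take_less[of "length t" "index_node n"] snoc by (simp, metis node_index_index_node)
    then have "path_labels tree_label t \<in> D (length t)"
      using IH by fastforce
    then have "infinite ({b. path_labels tree_label t @ [b] \<in> D (Suc (length t))} - set ?L)"
      by (simp add: D_extend)
    then obtain b where "b \<in> {b. path_labels tree_label t @ [b] \<in> D (Suc (length t))} - set ?L"
      by (metis infinite_imp_nonempty ex_in_conv)
    then have "?Q b"
      using snoc parent_labels_labels_upto[OF snoc] by simp
    then have "?Q (SOME b. ?Q b)"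
      by (rule someI)
    then have "?Q (fresh_label n ?L)"
      using snoc by (simp add: fresh_label_def)
    moreover have "path_labels tree_label (index_node n) = parent_labels n ?L @ [fresh_label n ?L]"
      using snoc parent_labels_labels_upto[OF snoc] tree_label_index_node[of n]
      by (simp add: path_labels_snoc)
    ultimately show ?thesis
      by simp
  qed
  then show "fresh_label n ?L \<notin> set ?L" "path_labels tree_label (index_node n) \<in> D (length (index_node n))"
    by simp_all
qed

lemma labels_upto_props:
  "distinct (labels_upto n) \<and> (\<forall>m<n. path_labels tree_label (index_node m) \<in> D (length (index_node m)))"
proof (induction n)
  case (Suc n)
  then show ?case
    using fresh_label_props[of n] by (auto simp: less_Suc_eq)
qed simp

lemma path_labels_tree_label: "path_labels tree_label t \<in> D (length t)"
  using labels_upto_props[of "Suc (node_index t)"] by (metis lessI index_node_node_index)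

lemma inj_tree_label: "inj tree_label"
proof (rule injI)
  fix s t assume eq: "tree_label s = tree_label t"
  let ?n = "Suc (max (node_index s) (node_index t))"
  have "labels_upto ?n ! node_index s = labels_upto ?n ! node_index t"
    using eq by (simp add: labels_upto_nth del: labels_upto.simps)
  then have "node_index s = node_index t"
    using labels_upto_props[of ?n] by (simp add: nth_eq_iff_index_eq)
  then show "s = t"
    using inj_node_index by (simp add: inj_eq)
qed

end

lemma tree_labelling_exists:
  fixes D :: "nat \<Rightarrow> 'a list set"
  assumes "\<And>i. D i \<noteq> {}" "\<And>i xs. xs \<in> D i \<Longrightarrow> length xs = i"
    and "\<And>i xs. xs \<in> D i \<Longrightarrow> infinite {b. xs @ [b] \<in> D (Suc i)}"
  obtains v :: "nat list \<Rightarrow> 'a" where "inj v" "\<And>t. path_labels v t \<in> D (length t)"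
  using inj_tree_label[of D, OF assms] path_labels_tree_label[of D, OF assms] by blast

section \<open>Square pairing and the column swindle\<close>

text \<open>Szudzik's pairing maps each square \<open>{..<r} \<times> {..<r}\<close> onto \<open>{..<r * r}\<close>, so acting inside
  columns by a block permutation yields a block permutation again.\<close>

definition square_encode :: "nat \<times> nat \<Rightarrow> nat" where
  "square_encode = (\<lambda>(n, m). if n < m then m * m + n else n * n + n + m)"

lemma square_encode_bounds:
  "max n m * max n m \<le> square_encode (n, m) \<and> square_encode (n, m) < Suc (max n m) * Suc (max n m)"
  by (auto simp: square_encode_def max_def)

lemma square_interval_unique:
  fixes a b x :: nat
  assumes "a * a \<le> x" "x < Suc a * Suc a" "b * b \<le> x" "x < Suc b * Suc b"
  shows "a = b"
proof (rule ccontr)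
  assume "a \<noteq> b"
  then have "Suc a \<le> b \<or> Suc b \<le> a"
    by linarith
  then show False
    using assms mult_le_mono[of "Suc a" b "Suc a" b] mult_le_mono[of "Suc b" a "Suc b" a] by linarith
qed

lemma inj_square_encode: "inj square_encode"
proof (rule injI, clarify)
  fix n m n' m' assume eq: "square_encode (n, m) = square_encode (n', m')"
  then have "max n m = max n' m'"
    using square_encode_bounds[of n m] square_encode_bounds[of n' m'] square_interval_unique by metis
  then show "n = n' \<and> m = m'"
    using eq by (auto simp: square_encode_def max_def split: if_splits)
qed

lemma square_encode_image_square: "square_encode ` ({..<r} \<times> {..<r}) = {..<r * r}"
proof (rule card_subset_eq)
  show "square_encode ` ({..<r} \<times> {..<r}) \<subseteq> {..<r * r}"
  proof clarify
    fix n m assume "n < r" "m < r"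
    then have "Suc (max n m) * Suc (max n m) \<le> r * r"
      by (intro mult_le_mono) auto
    then show "square_encode (n, m) < r * r"
      using square_encode_bounds[of n m] by linarith
  qed
  show "card (square_encode ` ({..<r} \<times> {..<r})) = card {..<r * r}"
    using inj_square_encode by (simp add: card_image inj_on_subset card_cartesian_product)
qed simp

lemma bij_square_encode: "bij square_encode"
proof (rule bijI[OF inj_square_encode])
  have "x \<in> square_encode ` ({..<Suc x} \<times> {..<Suc x})" for x
    by (simp add: square_encode_image_square)
  then show "surj square_encode"
    by blast
qed

definition map_columns :: "(nat \<Rightarrow> bool) \<Rightarrow> (nat \<Rightarrow> nat) \<Rightarrow> nat \<times> nat \<Rightarrow> nat \<times> nat" where
  "map_columns P b = (\<lambda>(n, m). (n, if P n then b m else m))"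

lemma map_columns_comp: "map_columns P b \<circ> map_columns P c = map_columns P (b \<circ> c)"
  by (auto simp: fun_eq_iff map_columns_def)

lemma map_columns_inv:
  assumes "bij b"
  shows "bij (map_columns P b)" "inv (map_columns P b) = map_columns P (inv b)"
proof -
  have "map_columns P b \<circ> map_columns P (inv b) = id" "map_columns P (inv b) \<circ> map_columns P b = id"
    using assms by (auto simp: fun_eq_iff map_columns_def bij_is_surj surj_f_inv_f bij_is_inj inv_f_f)
  then show "bij (map_columns P b)" "inv (map_columns P b) = map_columns P (inv b)"
    by (auto intro: o_bij inv_unique_comp)
qed

lemma map_columns_image_square:
  assumes "b ` {..<r} = {..<r}"
  shows "map_columns P b ` ({..<r} \<times> {..<r}) = {..<r} \<times> {..<r}"
proof (intro equalityI subsetI)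
  fix p assume "p \<in> map_columns P b ` ({..<r} \<times> {..<r})"
  then obtain n m where "n < r" "m < r" "p = map_columns P b (n, m)"
    by blast
  moreover have "b m < r"
    using assms imageI[of m "{..<r}" b] \<open>m < r\<close> by simp
  ultimately show "p \<in> {..<r} \<times> {..<r}"
    by (simp add: map_columns_def)
next
  fix p assume "p \<in> {..<r} \<times> {..<r}"
  then obtain n y where p: "p = (n, y)" "n < r" "y < r"
    by auto
  then obtain x where x: "x < r" "(if P n then b x else x) = y"
  proof (cases "P n")
    case True
    have "y \<in> b ` {..<r}"
      using assms p(3) by simp
    with True show ?thesis
      using that by auto
  qed (use p(3) that in auto)
  then have "p = map_columns P b (n, x)"
    using p(1) by (simp add: map_columns_def)
  then show "p \<in> map_columns P b ` ({..<r} \<times> {..<r})"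
    using p(2) x(1) by blast
qed

lemma block_perm_map_columns:
  assumes b: "block_perm b"
  shows "block_perm (square_encode \<circ> map_columns P b \<circ> inv square_encode)"
  unfolding block_perm_def
proof (intro conjI allI)
  show "bij (square_encode \<circ> map_columns P b \<circ> inv square_encode)"
    using b bij_square_encode map_columns_inv(1)
    by (auto simp: block_perm_def intro!: bij_comp bij_imp_bij_inv)
  fix N
  obtain r where r: "r \<ge> N" "segment_invariant b r"
    using b by (auto simp: block_perm_def)
  have "(square_encode \<circ> map_columns P b \<circ> inv square_encode) ` {..<r * r}
      = square_encode ` map_columns P b ` inv square_encode ` {..<r * r}"
    by (simp add: image_comp)
  also have "inv square_encode ` {..<r * r} = {..<r} \<times> {..<r}"
    using bij_square_encode by (metis bij_is_inj image_inv_f_f square_encode_image_square)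
  also have "map_columns P b ` ({..<r} \<times> {..<r}) = {..<r} \<times> {..<r}"
    using r(2) by (simp add: segment_invariant_def map_columns_image_square)
  finally have "segment_invariant (square_encode \<circ> map_columns P b \<circ> inv square_encode) (r * r)"
    by (simp add: segment_invariant_def square_encode_image_square)
  moreover have "N \<le> r * r"
    using r(1) le_square order_trans by blast
  ultimately show "\<exists>c\<ge>N. segment_invariant (square_encode \<circ> map_columns P b \<circ> inv square_encode) c"
    by blast
qed

text \<open>The successor map of the ordering \<open>\<dots> 5, 3, 1, 0, 2, 4, \<dots>\<close> of the naturals.\<close>

definition zigzag :: "nat \<Rightarrow> nat" where
  "zigzag n = (if even n then n + 2 else if n = 1 then 0 else n - 2)"

definition zigzag_inv :: "nat \<Rightarrow> nat" where
  "zigzag_inv n = (if n = 0 then 1 else if even n then n - 2 else n + 2)"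

definition column_shift :: "nat \<times> nat \<Rightarrow> nat \<times> nat" where
  "column_shift = map_prod zigzag id"

lemma column_shift_inv: "bij column_shift" "inv column_shift = map_prod zigzag_inv id"
proof -
  have "zigzag (zigzag_inv n) = n" "zigzag_inv (zigzag n) = n" for n
    by (auto simp: zigzag_def zigzag_inv_def) presburger+
  then have "column_shift \<circ> map_prod zigzag_inv id = id" "map_prod zigzag_inv id \<circ> column_shift = id"
    by (auto simp: fun_eq_iff column_shift_def)
  then show "bij column_shift" "inv column_shift = map_prod zigzag_inv id"
    by (auto intro: o_bij inv_unique_comp)
qed

text \<open>Hilbert's hotel: conjugating the column shift by \<open>b\<close> on the even columns and then undoing the
  shift leaves \<open>b\<close> acting on column \<open>0\<close> alone, the only even column that the shift fills from an
  odd one.\<close>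

lemma column_swindle:
  assumes "bij b"
  shows "map_columns even b \<circ> column_shift \<circ> map_columns even (inv b) \<circ> inv column_shift
    = map_columns (\<lambda>n. n = 0) b"
proof
  fix x :: "nat \<times> nat"
  obtain n m where x: "x = (n, m)"
    by fastforce
  have "b (inv b m) = m"
    using assms by (simp add: bij_is_surj surj_f_inv_f)
  then show "(map_columns even b \<circ> column_shift \<circ> map_columns even (inv b) \<circ> inv column_shift) x
    = map_columns (\<lambda>n. n = 0) b x"
    unfolding x column_shift_inv(2)
    by (simp add: column_shift_def map_columns_def zigzag_def zigzag_inv_def) presburger
qed

lemma map_permutation_apply_UNIV: "inj a \<Longrightarrow> map_permutation UNIV a p (a x) = a (p x)"
  by (simp add: map_permutation_apply)

lemma map_permutation_outside: "z \<notin> range a \<Longrightarrow> map_permutation UNIV a p z = z"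
  by (simp add: map_permutation_def)

lemma map_permutation_comp:
  "inj a \<Longrightarrow> bij q \<Longrightarrow> map_permutation UNIV a (p \<circ> q) = map_permutation UNIV a p \<circ> map_permutation UNIV a q"
  by (simp add: map_permutation_compose' permutes_univ bij_iff)

lemma map_permutation_inv:
  assumes a: "inj a" and p: "bij p"
  shows "bij (map_permutation UNIV a p)" "inv (map_permutation UNIV a p) = map_permutation UNIV a (inv p)"
proof -
  have "p \<circ> inv p = id" "inv p \<circ> p = id"
    using p by (simp_all add: bij_is_surj bij_is_inj flip: surj_iff inj_iff)
  then have "map_permutation UNIV a p \<circ> map_permutation UNIV a (inv p) = id"
    "map_permutation UNIV a (inv p) \<circ> map_permutation UNIV a p = id"
    using a p by (simp_all add: bij_imp_bij_inv map_permutation_id' flip: map_permutation_comp)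
  then show "bij (map_permutation UNIV a p)" "inv (map_permutation UNIV a p) = map_permutation UNIV a (inv p)"
    by (auto intro: o_bij inv_unique_comp)
qed

lemma map_permutation_conj:
  assumes a: "inj a" and k: "bij k" and l: "bij l" and kl: "\<And>x. k (a x) = a (l x)"
  shows "k \<circ> map_permutation UNIV a p \<circ> inv k = map_permutation UNIV a (l \<circ> p \<circ> inv l)"
proof
  fix z
  have k_inv: "inv k (a x) = a (inv l x)" for x
    using kl[of "inv l x"] k l by (metis bij_inv_eq_iff bij_is_surj surj_f_inv_f)
  show "(k \<circ> map_permutation UNIV a p \<circ> inv k) z = map_permutation UNIV a (l \<circ> p \<circ> inv l) z"
  proof (cases "z \<in> range a")
    case True
    then obtain x where "z = a x"
      by blast
    then show ?thesis
      using a by (simp add: k_inv kl map_permutation_apply_UNIV)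
  next
    case False
    have "inv k z \<notin> range a"
    proof
      assume "inv k z \<in> range a"
      then obtain y where "inv k z = a y"
        by blast
      then have "z = a (l y)"
        using k kl by (metis bij_inv_eq_iff)
      with False show False
        by blast
    qed
    with False k show ?thesis
      by (simp add: map_permutation_outside bij_is_surj surj_f_inv_f)
  qed
qed

lemma path_labels_block_word:
  "path_labels v (block_word l n) = map (\<lambda>i. v (block_word l (Suc i))) [0..<n]"
proof -
  have "path_labels v (block_word l n) = map (\<lambda>j. v (block_word l j)) [1..<Suc n]"
    unfolding path_labels_def length_block_word
    by (rule map_cong) (auto simp: block_word_take)
  also have "[1..<Suc n] = map Suc [0..<n]"
    by (simp add: map_Suc_upt)
  finally show ?thesis
    by simp
qed

lemma block_perm_realised:
  assumes G: "G \<subseteq> Collect bij"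
    and realise: "\<And>\<beta>. (\<forall>i. map \<beta> [0..<i] \<in> D i) \<Longrightarrow> \<exists>g\<in>G. \<forall>i. \<beta> i = g (\<alpha> i)"
    and v: "inj v" "\<And>t. path_labels v t \<in> D (length t)"
    and l: "block_perm l"
  obtains g where "g \<in> G" "\<And>i. (inv g \<circ> map_permutation UNIV v word_shift \<circ> g) (\<alpha> i) = \<alpha> (l i)"
proof -
  have "map (\<lambda>i. v (block_word l (Suc i))) [0..<n] \<in> D n" for n
    using v(2)[of "block_word l n"] by (simp add: path_labels_block_word)
  \<comment> \<open>the branch of \<open>l\<close> in the labelled tree is realised on \<open>\<alpha>\<close>\<close>
  then obtain g where g: "g \<in> G" "\<And>i. v (block_word l (Suc i)) = g (\<alpha> i)"
    using realise by blast
  have "(inv g \<circ> map_permutation UNIV v word_shift \<circ> g) (\<alpha> i) = \<alpha> (l i)" for i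
  proof -
    have "map_permutation UNIV v word_shift (g (\<alpha> i)) = g (\<alpha> (l i))"
      using v(1) l by (simp flip: g(2) add: map_permutation_apply_UNIV word_shift_block_word)
    then show ?thesis
      using G g(1) by (auto simp: bij_is_inj inv_f_f)
  qed
  with g(1) show ?thesis
    using that by blast
qed

lemma perm_group_column_perms:
  assumes K: "perm_group K" and a: "inj a"
    and shift: "map_permutation UNIV a column_shift \<in> K"
    and even: "\<And>b. block_perm b \<Longrightarrow> \<exists>k\<in>K. \<forall>x. k (a x) = a (map_columns even b x)"
    and p: "bij p"
  shows "map_permutation UNIV a (map_columns (\<lambda>n. n = 0) p) \<in> K"
proof -
  have block: "map_permutation UNIV a (map_columns (\<lambda>n. n = 0) b) \<in> K" if b: "block_perm b" for b
  proof -
    have bb: "bij b"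
      using b by (simp add: block_perm_def)
    obtain k where k: "k \<in> K" "\<And>x. k (a x) = a (map_columns even b x)"
      using even[OF b] by blast
    let ?M = "map_columns even b \<circ> column_shift \<circ> map_columns even (inv b)"
    have "k \<circ> map_permutation UNIV a column_shift \<circ> inv k = map_permutation UNIV a ?M"
      using map_permutation_conj[where l = "map_columns even b", OF a perm_group_bij[OF K k(1)]
          map_columns_inv(1)[OF bb] k(2)]
      by (simp add: map_columns_inv(2)[OF bb])
    moreover have "inv (map_permutation UNIV a column_shift) = map_permutation UNIV a (inv column_shift)"
      using map_permutation_inv(2)[OF a column_shift_inv(1)] .
    ultimately have "map_permutation UNIV a ?M \<circ> map_permutation UNIV a (inv column_shift) \<in> K"
      using K k(1) shift by (metis perm_group_comp perm_group_conj_iff perm_group_inv)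
    moreover have "map_permutation UNIV a (?M \<circ> inv column_shift)
        = map_permutation UNIV a ?M \<circ> map_permutation UNIV a (inv column_shift)"
      by (rule map_permutation_comp[OF a bij_imp_bij_inv[OF column_shift_inv(1)]])
    ultimately show ?thesis
      by (simp add: column_swindle[OF bb])
  qed
  obtain b1 b2 where b: "block_perm b1" "block_perm b2" "p = b1 \<circ> b2"
    using bij_nat_eq_comp_block_perms[OF p] .
  have "map_permutation UNIV a (map_columns (\<lambda>n. n = 0) p)
      = map_permutation UNIV a (map_columns (\<lambda>n. n = 0) b1) \<circ> map_permutation UNIV a (map_columns (\<lambda>n. n = 0) b2)"
    using b a by (simp add: map_columns_comp[symmetric] map_permutation_comp map_columns_inv(1) block_perm_def)
  then show ?thesis
    using block b perm_group_comp[OF K] by simp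
qed

lemma permutes_column_obtains_bij:
  assumes a: "inj a" and f: "f permutes a ` ({0} \<times> UNIV)"
  obtains p where "bij p" "\<And>m. f (a (0, m)) = a (0, p m)"
proof -
  let ?S = "a ` ({0} \<times> UNIV)"
  have column: "g (a (0, m)) = a (0, snd (inv a (g (a (0, m)))))" if g: "g permutes ?S" for g m
  proof -
    have "g (a (0, m)) \<in> ?S"
      using g by (simp add: permutes_in_image)
    then obtain m' where "g (a (0, m)) = a (0, m')"
      by blast
    then show ?thesis
      using a by (simp add: inv_f_f)
  qed
  define p where "p m = snd (inv a (f (a (0, m))))" for m
  define p' where "p' m = snd (inv a (inv f (a (0, m))))" for m
  have fp: "f (a (0, m)) = a (0, p m)" and fp': "inv f (a (0, m)) = a (0, p' m)" for m
    unfolding p_def p'_def using column f permutes_inv by blast+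
  have "p (p' m) = m" "p' (p m) = m" for m
    using fp[of "p' m"] fp'[of "p m"] fp'[of m] fp[of m] f a
    by (metis (no_types, lifting) injD permutes_inverses prod.inject)+
  then have "bij p"
    by (intro o_bij[where f = p and g = p']) (auto simp: fun_eq_iff)
  with fp show ?thesis
    using that by blast
qed

lemma permutes_column_eq_map_permutation:
  assumes a: "inj a" and f: "f permutes a ` ({0} \<times> UNIV)"
  obtains p where "bij p" "f = map_permutation UNIV a (map_columns (\<lambda>n. n = 0) p)"
proof -
  obtain p where p: "bij p" "\<And>m. f (a (0, m)) = a (0, p m)"
    using permutes_column_obtains_bij[OF a f] by blast
  have "f z = map_permutation UNIV a (map_columns (\<lambda>n. n = 0) p) z" for z
  proof (cases "z \<in> range a")
    case True
    then obtain n m where z: "z = a (n, m)"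
      by auto
    show ?thesis
    proof (cases "n = 0")
      case True
      then show ?thesis
        using a z p(2) by (simp add: map_permutation_apply_UNIV map_columns_def)
    next
      case False
      then have "z \<notin> a ` ({0} \<times> UNIV)"
        using a z by (auto simp: inj_eq)
      then show ?thesis
        using a z f False by (simp add: permutes_not_in map_permutation_apply_UNIV map_columns_def)
    qed
  next
    case False
    then have "z \<notin> a ` ({0} \<times> UNIV)"
      by blast
    with False f show ?thesis
      by (simp add: permutes_not_in map_permutation_outside)
  qed
  with p(1) show ?thesis
    using that by blast
qed

lemma column_image_moiety:
  fixes a :: "nat \<times> nat \<Rightarrow> 'a"
  assumes a: "inj a"
  shows "infinite (a ` ({0} \<times> UNIV))" "infinite (- a ` ({0} \<times> UNIV))"
proof -
  have column: "infinite (a ` ({n} \<times> UNIV))" for n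
    using a by (simp add: finite_image_iff inj_on_subset finite_cartesian_product_iff)
  then show "infinite (a ` ({0} \<times> UNIV))" .
  have "a ` ({1} \<times> UNIV) \<subseteq> - a ` ({0} \<times> UNIV)"
    using a by (auto simp: inj_eq)
  then show "infinite (- a ` ({0} \<times> UNIV))"
    using column[of 1] finite_subset by blast
qed

lemma block_perm_realised_on_columns:
  assumes G: "G \<subseteq> Collect bij"
    and realise: "\<And>\<beta>. (\<forall>i. map \<beta> [0..<i] \<in> D i) \<Longrightarrow> \<exists>g\<in>G. \<forall>i. \<beta> i = g (\<alpha> i)"
    and v: "inj v" "\<And>t. path_labels v t \<in> D (length t)"
    and b: "block_perm b"
  obtains g where "g \<in> G" "\<And>x. (inv g \<circ> map_permutation UNIV v word_shift \<circ> g) (\<alpha> (square_encode x))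
    = \<alpha> (square_encode (map_columns P b x))"
proof -
  obtain g where "g \<in> G"
    "\<And>i. (inv g \<circ> map_permutation UNIV v word_shift \<circ> g) (\<alpha> i)
      = \<alpha> ((square_encode \<circ> map_columns P b \<circ> inv square_encode) i)"
    using block_perm_realised[OF G realise v block_perm_map_columns[OF b]] by blast
  then show ?thesis
    using that inj_square_encode by (metis comp_apply inv_f_f)
qed

lemma finite_extension_generates_bij:
  fixes G :: "('a \<Rightarrow> 'a) set" and \<alpha> :: "nat \<Rightarrow> 'a" and D :: "nat \<Rightarrow> 'a list set"
  assumes cU: "countable (UNIV :: 'a set)" and G: "G \<subseteq> Collect bij" and \<alpha>: "inj \<alpha>"
    and D: "\<And>i. D i \<noteq> {}" "\<And>i xs. xs \<in> D i \<Longrightarrow> length xs = i"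
      "\<And>i xs. xs \<in> D i \<Longrightarrow> infinite {b. xs @ [b] \<in> D (Suc i)}"
    and realise: "\<And>\<beta>. (\<forall>i. map \<beta> [0..<i] \<in> D i) \<Longrightarrow> \<exists>g\<in>G. \<forall>i. \<beta> i = g (\<alpha> i)"
  obtains U where "finite U" "U \<subseteq> Collect bij" "\<And>K. perm_group K \<Longrightarrow> G \<union> U \<subseteq> K \<Longrightarrow> Collect bij \<subseteq> K"
proof -
  obtain v where v: "inj v" "\<And>t. path_labels v t \<in> D (length t)"
    using tree_labelling_exists[of D, OF D] by blast
  define a where "a = \<alpha> \<circ> square_encode"
  have a: "inj a"
    unfolding a_def using \<alpha> inj_square_encode by (rule inj_compose)
  let ?S = "a ` ({0} \<times> UNIV)"
  obtain U0 where U0: "finite U0" "U0 \<subseteq> Collect bij"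
    "\<And>K. perm_group K \<Longrightarrow> U0 \<subseteq> K \<Longrightarrow> {p. p permutes ?S} \<subseteq> K \<Longrightarrow> Collect bij \<subseteq> K"
    using moiety_generates_bij[OF cU column_image_moiety[OF a]] by metis
  let ?N = "map_permutation UNIV v word_shift" and ?T = "map_permutation UNIV a column_shift"
  show ?thesis
  proof
    show "finite (insert ?N (insert ?T U0))"
      using U0(1) by simp
    show "insert ?N (insert ?T U0) \<subseteq> Collect bij"
      using U0(2) map_permutation_inv(1)[OF v(1) bij_word_shift] map_permutation_inv(1)[OF a column_shift_inv(1)]
      by simp
  next
    fix K assume K: "perm_group K" and GUK: "G \<union> insert ?N (insert ?T U0) \<subseteq> K"
    have "\<exists>k\<in>K. \<forall>x. k (a x) = a (map_columns even b x)" if b: "block_perm b" for b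
    proof -
      obtain g where g: "g \<in> G"
        "\<And>x. (inv g \<circ> ?N \<circ> g) (a x) = a (map_columns even b x)"
        using block_perm_realised_on_columns[OF G realise v b] unfolding a_def comp_apply by metis
      moreover have "inv g \<circ> ?N \<circ> g \<in> K"
        using K GUK g(1) by (metis Un_subset_iff insert_subset perm_group_comp perm_group_inv subsetD)
      ultimately show ?thesis
        by blast
    qed
    then have "map_permutation UNIV a (map_columns (\<lambda>n. n = 0) p) \<in> K" if "bij p" for p
      using perm_group_column_perms[OF K a _ _ that] GUK by blast
    then have "{p. p permutes ?S} \<subseteq> K"
      using permutes_column_eq_map_permutation[OF a] by blast
    then show "Collect bij \<subseteq> K"
      using U0(3)[OF K] GUK by blast
  qed
qed

lemma sym_approx_carrier_SymG:
  assumes G: "subgroup G SymG" and U: "finite U" "U \<subseteq> Collect bij"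
    and gen: "\<And>K. perm_group K \<Longrightarrow> G \<union> U \<subseteq> K \<Longrightarrow> Collect bij \<subseteq> K"
  shows "sym_approx G (carrier SymG)"
proof -
  have GS: "G \<subseteq> carrier SymG"
    using G by (rule subgroup.subset)
  have "G \<subseteq> generate SymG (carrier SymG \<union> {})"
    using GS generate.incl[of _ "carrier SymG" SymG] by auto
  then have "sym_preceq G (carrier SymG)"
    unfolding sym_preceq_def by blast
  moreover have "G \<union> U \<subseteq> generate SymG (G \<union> U)"
    by (auto intro: generate.incl)
  then have "carrier SymG \<subseteq> generate SymG (G \<union> U)"
    using gen[OF perm_group_generate_SymG] GS U(2) by (simp add: carrier_SymG)
  then have "sym_preceq (carrier SymG) G"
    unfolding sym_preceq_def using U by (auto simp: carrier_SymG)
  ultimately show ?thesis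
    unfolding sym_approx_def by blast
qed

theorem lemma5p2:
  fixes G :: "('a \<Rightarrow> 'a) set"
    and \<alpha> :: "nat \<Rightarrow> 'a"
    and D :: "nat \<Rightarrow> 'a list set"
  assumes "countable (UNIV :: 'a set)" and "infinite (UNIV :: 'a set)"
    and "subgroup G SymG"
    and "inj \<alpha>"
    and "\<And>i. D i \<noteq> {}"
    and "\<And>i xs. xs \<in> D i \<Longrightarrow> length xs = i"
    and "\<And>i xs. xs \<in> D (Suc i) \<Longrightarrow> butlast xs \<in> D i"
    and "\<And>i xs. xs \<in> D i \<Longrightarrow> infinite {b. xs @ [b] \<in> D (Suc i)}"
    and "\<And>\<beta>. (\<forall>i. map \<beta> [0..<i] \<in> D i) \<Longrightarrow> (\<exists>g\<in>G. \<forall>i. \<beta> i = g (\<alpha> i))"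
  shows "sym_approx G (carrier SymG)"
proof -
  have G: "G \<subseteq> Collect bij"
    using subgroup.subset[OF assms(3)] by (simp add: carrier_SymG)
  obtain U where "finite U" "U \<subseteq> Collect bij" "\<And>K. perm_group K \<Longrightarrow> G \<union> U \<subseteq> K \<Longrightarrow> Collect bij \<subseteq> K"
    using finite_extension_generates_bij[of G \<alpha> D, OF assms(1) G assms(4-6,8,9)] by metis
  then show ?thesis
    by (rule sym_approx_carrier_SymG[OF assms(3)])
qed

end
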